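(* Let $H$ be a Hilbert space and $U_{ik}\in B(H)$, $i,k=1,\dots,n$, operators satisfying relations (R1)–(R5). Then $U_{ik}U_{il}=0$ for all $i,k,l$ with $k\neq l$.
   Context: $n\ge2$, $\theta\in M_n(\mathbb R)$ skew-symmetric, $\omega_{ij}=e^{2\pi i\theta_{ij}}$. Relations, for all $i,j,k,l\in\{1,\dots,n\}$: (R1) $U_{ik}U_{jl}+\omega_{ji}U_{jk}U_{il}=\omega_{kl}U_{il}U_{jk}+\omega_{ji}\omega_{kl}U_{jl}U_{ik}$; (R2) $\sum_iU_{ik}U_{il}^*=\delta_{kl}1$; (R3) $\sum_iU_{il}^*U_{ik}=\delta_{kl}1$; (R4) $U_{jk}U_{ik}^*=0$ for $i\neq j$; (R5) $U_{ik}^*U_{jk}=0$ for $i\neq j$. *)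

theory Defs
  imports Complex_Main
begin

text \<open>Complex Hilbert spaces are not in the distribution library, so we introduce
  them as a type class: a complex vector space with a (second-argument linear)
  inner product that is complete with respect to the induced norm.\<close>

class complex_vs = ab_group_add +
  fixes hscale :: "complex \<Rightarrow> 'a \<Rightarrow> 'a"
  assumes hscale_add_right: "hscale a (x + y) = hscale a x + hscale a y"
    and hscale_add_left: "hscale (a + b) x = hscale a x + hscale b x"
    and hscale_hscale: "hscale a (hscale b x) = hscale (a * b) x"
    and hscale_one: "hscale 1 x = x"

class complex_inner_space = complex_vs +
  fixes hinner :: "'a \<Rightarrow> 'a \<Rightarrow> complex"
  assumes hinner_conj: "hinner x y = cnj (hinner y x)"
    and hinner_add_right: "hinner x (y + z) = hinner x y + hinner x z"
    and hinner_scale_right: "hinner x (hscale a y) = a * hinner x y"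
    and hinner_self_real: "Im (hinner x x) = 0"
    and hinner_self_nonneg: "Re (hinner x x) \<ge> 0"
    and hinner_self_eq_0: "hinner x x = 0 \<longleftrightarrow> x = 0"

class complex_hilbert = complex_inner_space +
  assumes complete:
    "(\<forall>e::real>0. \<exists>N::nat. \<forall>m\<ge>N. \<forall>k\<ge>N. sqrt (Re (hinner ((X::nat \<Rightarrow> 'a) m - X k) (X m - X k))) < e)
      \<Longrightarrow> (\<exists>L. \<forall>e::real>0. \<exists>N::nat. \<forall>k\<ge>N. sqrt (Re (hinner (X k - L) (X k - L))) < e)"

definition hnorm :: "'a::complex_inner_space \<Rightarrow> real" where
  "hnorm x = sqrt (Re (hinner x x))"

definition bounded_op :: "('a::complex_inner_space \<Rightarrow> 'a) \<Rightarrow> bool" where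
  "bounded_op T \<longleftrightarrow> (\<forall>x y. T (x + y) = T x + T y) \<and> (\<forall>c x. T (hscale c x) = hscale c (T x))
     \<and> (\<exists>K. \<forall>x. hnorm (T x) \<le> K * hnorm x)"

definition is_adjoint :: "('a::complex_inner_space \<Rightarrow> 'a) \<Rightarrow> ('a \<Rightarrow> 'a) \<Rightarrow> bool" where
  "is_adjoint T S \<longleftrightarrow> bounded_op S \<and> (\<forall>x y. hinner (T x) y = hinner x (S y))"

definition omega :: "(nat \<Rightarrow> nat \<Rightarrow> real) \<Rightarrow> nat \<Rightarrow> nat \<Rightarrow> complex" where
  "omega \<theta> i j = exp (2 * pi * \<i> * complex_of_real (\<theta> i j))"

end

theory Submission
  imports Defs
begin

text \<open>Relations (R2) and (R5) make each \<open>U\<^sub>i\<^sub>k\<close> a partial isometry,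
  \<open>U\<^sub>i\<^sub>k U\<^sub>i\<^sub>k\<^sup>* U\<^sub>i\<^sub>k = U\<^sub>i\<^sub>k\<close>, and (R3), (R4) then give
  \<open>U\<^sub>i\<^sub>k\<^sup>* U\<^sub>i\<^sub>l = 0\<close> for \<open>k \<noteq> l\<close>. For \<open>i = j\<close> relation (R1) reads
  \<open>2 U\<^sub>i\<^sub>k U\<^sub>i\<^sub>l = 2 \<omega>\<^sub>k\<^sub>l U\<^sub>i\<^sub>l U\<^sub>i\<^sub>k\<close>, hence
  \<open>U\<^sub>i\<^sub>k U\<^sub>i\<^sub>l = U\<^sub>i\<^sub>k U\<^sub>i\<^sub>k\<^sup>* U\<^sub>i\<^sub>k U\<^sub>i\<^sub>l = \<omega>\<^sub>k\<^sub>l U\<^sub>i\<^sub>k (U\<^sub>i\<^sub>k\<^sup>* U\<^sub>i\<^sub>l) U\<^sub>i\<^sub>k = 0\<close>.\<close>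

lemma hscale_zero_right [simp]: "hscale c (0::'a::complex_vs) = 0"
  by (rule additive.zero) (unfold_locales, rule hscale_add_right)

lemma double_eq_imp_eq:
  fixes a b :: "'a::complex_vs"
  assumes "a + a = b + b"
  shows "a = b"
proof -
  have double: "x + x = hscale 2 x" for x :: 'a
    using hscale_add_left[of 1 1 x] by (simp add: hscale_one)
  have "hscale (1/2) (hscale 2 a) = hscale (1/2) (hscale 2 b)"
    using assms by (simp only: double)
  then show ?thesis by (simp add: hscale_hscale hscale_one)
qed

lemma bounded_op_zero: "bounded_op T \<Longrightarrow> T 0 = 0"
  unfolding bounded_op_def by (intro additive.zero additive.intro) blast

lemma bounded_op_hscale: "bounded_op T \<Longrightarrow> T (hscale c x) = hscale c (T x)"
  unfolding bounded_op_def by blast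

lemma omega_diag:
  assumes "\<theta> i i = - \<theta> i i"
  shows "omega \<theta> i i = 1"
proof -
  have "\<theta> i i = 0" using assms by linarith
  then show ?thesis by (simp add: omega_def)
qed

lemma sum_eq_single_term:
  assumes "finite A" "a \<in> A" "\<And>j. j \<in> A \<Longrightarrow> j \<noteq> a \<Longrightarrow> f j = 0"
  shows "sum f A = f a"
  using sum.mono_neutral_right[of A "{a}" f] assms by auto

locale column_relations =
  fixes n :: nat and U Ustar :: "nat \<Rightarrow> nat \<Rightarrow> 'h::complex_inner_space \<Rightarrow> 'h"
  assumes U_bounded: "i \<in> {1..n} \<Longrightarrow> k \<in> {1..n} \<Longrightarrow> bounded_op (U i k)"
    and Ustar_bounded: "i \<in> {1..n} \<Longrightarrow> k \<in> {1..n} \<Longrightarrow> bounded_op (Ustar i k)"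
    and R2: "k \<in> {1..n} \<Longrightarrow> (\<Sum>i\<in>{1..n}. U i k (Ustar i k x)) = x"
    and R3: "k \<in> {1..n} \<Longrightarrow> l \<in> {1..n} \<Longrightarrow> k \<noteq> l \<Longrightarrow> (\<Sum>i\<in>{1..n}. Ustar i k (U i l x)) = 0"
    and R4: "i \<in> {1..n} \<Longrightarrow> j \<in> {1..n} \<Longrightarrow> k \<in> {1..n} \<Longrightarrow> i \<noteq> j \<Longrightarrow> U j k (Ustar i k x) = 0"
    and R5: "i \<in> {1..n} \<Longrightarrow> j \<in> {1..n} \<Longrightarrow> k \<in> {1..n} \<Longrightarrow> i \<noteq> j \<Longrightarrow> Ustar i k (U j k x) = 0"
begin

lemma partial_isometry:
  assumes i: "i \<in> {1..n}" and k: "k \<in> {1..n}"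
  shows "U i k (Ustar i k (U i k x)) = U i k x"
proof -
  have "(\<Sum>j\<in>{1..n}. U j k (Ustar j k (U i k x))) = U i k (Ustar i k (U i k x))"
  proof (rule sum_eq_single_term[OF _ i])
    fix j assume j: "j \<in> {1..n}" "j \<noteq> i"
    then have "Ustar j k (U i k x) = 0" using R5 i k by blast
    then show "U j k (Ustar j k (U i k x)) = 0" using bounded_op_zero[OF U_bounded[OF j(1) k]] by simp
  qed simp
  then show ?thesis using R2[OF k] by simp
qed

lemma Ustar_U_orthogonal:
  assumes i: "i \<in> {1..n}" and k: "k \<in> {1..n}" and l: "l \<in> {1..n}" and "k \<noteq> l"
  shows "Ustar i k (U i l x) = 0"
proof -
  have "(\<Sum>j\<in>{1..n}. Ustar j k (U j l (Ustar i l (U i l x))))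
      = Ustar i k (U i l (Ustar i l (U i l x)))"
  proof (rule sum_eq_single_term[OF _ i])
    fix j assume j: "j \<in> {1..n}" "j \<noteq> i"
    then have "U j l (Ustar i l (U i l x)) = 0" using R4 i l by blast
    then show "Ustar j k (U j l (Ustar i l (U i l x))) = 0"
      using bounded_op_zero[OF Ustar_bounded[OF j(1) k]] by simp
  qed simp
  then show ?thesis using R3[OF k l \<open>k \<noteq> l\<close>] partial_isometry[OF i l] by simp
qed

lemma U_product_zero_if_twisted_commute:
  assumes i: "i \<in> {1..n}" and k: "k \<in> {1..n}" and l: "l \<in> {1..n}" and "k \<noteq> l"
    and twisted: "U i k (U i l x) = hscale c (U i l (U i k x))"
  shows "U i k (U i l x) = 0"
proof -
  have "U i k (U i l x) = U i k (Ustar i k (U i k (U i l x)))"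
    using partial_isometry[OF i k] by simp
  also have "\<dots> = U i k (hscale c (Ustar i k (U i l (U i k x))))"
    using bounded_op_hscale[OF Ustar_bounded[OF i k]] twisted by simp
  also have "\<dots> = 0"
    using Ustar_U_orthogonal[OF i k l \<open>k \<noteq> l\<close>] bounded_op_zero[OF U_bounded[OF i k]]
    by simp
  finally show ?thesis .
qed

end

theorem proposition3p13:
  fixes n :: nat and \<theta> :: "nat \<Rightarrow> nat \<Rightarrow> real"
    and U Ustar :: "nat \<Rightarrow> nat \<Rightarrow> 'h::complex_hilbert \<Rightarrow> 'h"
  assumes n2: "n \<ge> 2"
    and skew: "\<forall>i\<in>{1..n}. \<forall>j\<in>{1..n}. \<theta> i j = - \<theta> j i"
    and bdd: "\<forall>i\<in>{1..n}. \<forall>k\<in>{1..n}. bounded_op (U i k)"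
    and adj: "\<forall>i\<in>{1..n}. \<forall>k\<in>{1..n}. is_adjoint (U i k) (Ustar i k)"
    and R1: "\<forall>i\<in>{1..n}. \<forall>j\<in>{1..n}. \<forall>k\<in>{1..n}. \<forall>l\<in>{1..n}. \<forall>x.
        U i k (U j l x) + hscale (omega \<theta> j i) (U j k (U i l x))
      = hscale (omega \<theta> k l) (U i l (U j k x))
        + hscale (omega \<theta> j i * omega \<theta> k l) (U j l (U i k x))"
    and R2: "\<forall>k\<in>{1..n}. \<forall>l\<in>{1..n}. \<forall>x.
        (\<Sum>i\<in>{1..n}. U i k (Ustar i l x)) = (if k = l then x else 0)"
    and R3: "\<forall>k\<in>{1..n}. \<forall>l\<in>{1..n}. \<forall>x.
        (\<Sum>i\<in>{1..n}. Ustar i l (U i k x)) = (if k = l then x else 0)"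
    and R4: "\<forall>i\<in>{1..n}. \<forall>j\<in>{1..n}. \<forall>k\<in>{1..n}. i \<noteq> j \<longrightarrow>
        (\<forall>x. U j k (Ustar i k x) = 0)"
    and R5: "\<forall>i\<in>{1..n}. \<forall>j\<in>{1..n}. \<forall>k\<in>{1..n}. i \<noteq> j \<longrightarrow>
        (\<forall>x. Ustar i k (U j k x) = 0)"
  shows "\<forall>i\<in>{1..n}. \<forall>k\<in>{1..n}. \<forall>l\<in>{1..n}. k \<noteq> l \<longrightarrow>
        (\<forall>x. U i k (U i l x) = 0)"
proof (intro ballI impI allI)
  fix i k l x assume i: "i \<in> {1..n}" and k: "k \<in> {1..n}" and l: "l \<in> {1..n}" and "k \<noteq> l"
  interpret column_relations n U Ustar
    using bdd adj R2 R3 R4 R5 by unfold_locales (auto simp: is_adjoint_def)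
  have "omega \<theta> i i = 1" using skew i by (intro omega_diag) blast
  then have "U i k (U i l x) + U i k (U i l x)
      = hscale (omega \<theta> k l) (U i l (U i k x)) + hscale (omega \<theta> k l) (U i l (U i k x))"
    using R1 i k l by (metis hscale_one mult_1)
  then have "U i k (U i l x) = hscale (omega \<theta> k l) (U i l (U i k x))"
    by (rule double_eq_imp_eq)
  then show "U i k (U i l x) = 0"
    using U_product_zero_if_twisted_commute i k l \<open>k \<noteq> l\<close> by blast
qed

end
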